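(* Let $\Lambda\in\mathbb{R}^{p\times p}$ be a discrete-time interconnection. There exists $\alpha>0$ such that for every $Q:\mathbb{N}\to\overline{\mathcal Q}_n$, the solution of $\mathbf x^+=(I_{np}+(\Lambda-I_p)\otimes Q_k)\mathbf x$ satisfies $|\mathbf x(k)|\le\alpha|\mathbf x(0)|$ for all $k\in\mathbb{N}$.
   Context: $|\cdot|$ Euclidean / induced 2-norm; $\otimes$ Kronecker product; $\overline{\mathcal Q}_n$ the set of symmetric positive semidefinite $n\times n$ matrices $R$ with $|R|\le1$. A discrete-time interconnection is $\Lambda=[\lambda_{ij}]$ with $\lambda_{ij}\ge0$ and $\sum_j\lambda_{ij}=1$ for all $i$. Equivalently, with $\mathbf x=[x_1^T\cdots x_p^T]^T$, the system is $x_i^+=x_i+Q_k\sum_{j\ne i}\lambda_{ij}(x_j-x_i)$. *)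

theory Defs
  imports "HOL-Analysis.Analysis"
begin

text \<open>Kronecker product of a p x p matrix with an n x n matrix, indexed by pairs
  (block index, inner index); the stacked vector [x_1; ...; x_p] is real^('p \<times> 'n).\<close>
definition kron :: "real^'p^'p \<Rightarrow> real^'n^'n \<Rightarrow> real^('p \<times> 'n)^('p \<times> 'n)" where
  "kron A B = (\<chi> r. \<chi> c. A$(fst r)$(fst c) * B$(snd r)$(snd c))"

definition dt_interconnection :: "real^'p^'p \<Rightarrow> bool" where
  "dt_interconnection \<Lambda> \<longleftrightarrow> (\<forall>i j. 0 \<le> \<Lambda>$i$j) \<and> (\<forall>i. (\<Sum>j\<in>UNIV. \<Lambda>$i$j) = 1)"

definition Qbar :: "(real^'n^'n) set" where
  "Qbar = {R. transpose R = R \<and> (\<forall>v. 0 \<le> v \<bullet> (R *v v)) \<and> onorm (\<lambda>v. R *v v) \<le> 1}"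

end

theory Submission
  imports Defs "Jordan_Normal_Form.Jordan_Normal_Form_Existence"
begin

text \<open>
  The powers of the row-stochastic matrix \<open>\<Lambda>\<close> are bounded, so in its Jordan form all eigenvalues
  satisfy \<open>|\<lambda>| \<le> 1\<close> and nontrivial Jordan blocks occur only for \<open>|\<lambda>| < 1\<close>. Rescaling the Jordan
  basis shrinks the superdiagonal ones to a small \<open>\<epsilon>\<close>, which gives left vectors \<open>s\<^sub>i\<close> forming a
  basis with \<open>s\<^sub>i \<Lambda> = \<lambda>\<^sub>i s\<^sub>i + \<beta>\<^sub>i s\<^sub>i\<^sub>+\<^sub>1\<close>, where \<open>|\<lambda>\<^sub>i| + \<beta>\<^sub>i \<le> 1\<close> and \<open>|\<lambda>\<^sub>i\<^sub>+\<^sub>1| + \<beta>\<^sub>i \<le> 1\<close>.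
  In the coordinates \<open>y\<^sub>i = (s\<^sub>i \<otimes> I) x\<close> the system reads \<open>y\<^sub>i\<^sup>+ = y\<^sub>i + Q (z\<^sub>i - y\<^sub>i)\<close> with
  \<open>z\<^sub>i = \<lambda>\<^sub>i y\<^sub>i + \<beta>\<^sub>i y\<^sub>i\<^sub>+\<^sub>1\<close>. Since \<open>0 \<le> Q \<le> I\<close> this gives
  \<open>|y\<^sub>i\<^sup>+|\<^sup>2 \<le> |y\<^sub>i|\<^sup>2 - (1 - |\<lambda>\<^sub>i|) \<langle>y\<^sub>i, Q y\<^sub>i\<rangle> + \<beta>\<^sub>i \<langle>y\<^sub>i\<^sub>+\<^sub>1, Q y\<^sub>i\<^sub>+\<^sub>1\<rangle>\<close>, and the last terms
  telescope away when summing over \<open>i\<close>. Hence \<open>V = \<Sum>\<^sub>i |y\<^sub>i|\<^sup>2\<close> is nonincreasing along every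
  solution, and \<open>V\<close> is equivalent to \<open>|x|\<^sup>2\<close> because the \<open>s\<^sub>i\<close> form a basis.
\<close>

lemma sum_eq_single:
  "finite A \<Longrightarrow> a \<in> A \<Longrightarrow> (\<And>l. l \<in> A \<Longrightarrow> l \<noteq> a \<Longrightarrow> f l = 0) \<Longrightarrow> sum f A = f a"
  by (simp add: sum.remove)

lemma sum_eq_two:
  assumes "finite A" "a \<in> A" "b \<in> A" "a \<noteq> b" "\<And>l. l \<in> A \<Longrightarrow> l \<noteq> a \<Longrightarrow> l \<noteq> b \<Longrightarrow> f l = 0"
  shows "sum f A = f a + f b"
proof -
  have "sum f A = f a + sum f (A - {a})" using assms by (simp add: sum.remove)
  also have "sum f (A - {a}) = f b" using assms by (intro sum_eq_single) auto
  finally show ?thesis .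
qed

lemma index_mult_mat_sum:
  "A \<in> carrier_mat n n \<Longrightarrow> B \<in> carrier_mat n n \<Longrightarrow> i < n \<Longrightarrow> j < n \<Longrightarrow>
   (A * B) $$ (i, j) = (\<Sum>l<n. A $$ (i, l) * B $$ (l, j))"
  by (auto simp: scalar_prod_def lessThan_atLeast0 intro!: sum.cong)

definition jordan_bidiagonal :: "'a::zero_neq_one mat \<Rightarrow> nat \<Rightarrow> bool" where
  "jordan_bidiagonal J n \<longleftrightarrow> (\<forall>i<n. \<forall>j<n. (j \<noteq> i \<and> j \<noteq> Suc i \<longrightarrow> J $$ (i, j) = 0) \<and>
     (j = Suc i \<longrightarrow> J $$ (i, j) = 0 \<or> (J $$ (i, j) = 1 \<and> J $$ (j, j) = J $$ (i, i))))"

lemma jordan_matrix_bidiagonal: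
  "jordan_bidiagonal (jordan_matrix n_as) (sum_list (map fst n_as))"
  unfolding jordan_bidiagonal_def
proof (induction n_as)
  case Nil
  then show ?case by simp
next
  case (Cons na n_as)
  obtain n a where na: "na = (n, a)" by force
  let ?N = "sum_list (map fst n_as)"
  show ?case
  proof (intro allI impI)
    fix i j
    assume "i < sum_list (map fst (na # n_as))" "j < sum_list (map fst (na # n_as))"
    then have ij: "i < n + ?N" "j < n + ?N" using na by auto
    show "(j \<noteq> i \<and> j \<noteq> Suc i \<longrightarrow> jordan_matrix (na # n_as) $$ (i, j) = 0) \<and>
          (j = Suc i \<longrightarrow> jordan_matrix (na # n_as) $$ (i, j) = 0 \<or>
             jordan_matrix (na # n_as) $$ (i, j) = 1 \<and>
             jordan_matrix (na # n_as) $$ (j, j) = jordan_matrix (na # n_as) $$ (i, i))"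
    proof (cases "i < n")
      case True
      then show ?thesis using ij unfolding na jordan_matrix_Cons by auto
    next
      case False
      then have "i - n < ?N" "j - n < ?N \<or> j < n" using ij by auto
      then show ?thesis using ij False Cons.IH[rule_format, of "i - n" "j - n"]
        unfolding na jordan_matrix_Cons by (auto simp: Suc_diff_le)
    qed
  qed
qed

context
  fixes J :: "'a::comm_ring_1 mat" and n :: nat
  assumes J: "J \<in> carrier_mat n n" and bidiag: "jordan_bidiagonal J n"
begin

lemma jordan_bidiagonal_power_below_diag:
  "i < n \<Longrightarrow> j < i \<Longrightarrow> (J ^\<^sub>m k) $$ (i, j) = 0"
proof (induction k arbitrary: i j)
  case 0
  then show ?case using J by auto
next
  case (Suc k)
  have "(J ^\<^sub>m Suc k) $$ (i, j) = (\<Sum>l<n. (J ^\<^sub>m k) $$ (i, l) * J $$ (l, j))"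
    using index_mult_mat_sum[of "J ^\<^sub>m k" n J i j] Suc.prems J by auto
  also have "\<dots> = 0"
  proof (intro sum.neutral ballI)
    fix l assume l: "l \<in> {..<n}"
    show "(J ^\<^sub>m k) $$ (i, l) * J $$ (l, j) = 0"
    proof (cases "l < i")
      case True
      then show ?thesis using Suc l by auto
    next
      case False
      then have "J $$ (l, j) = 0" using bidiag Suc.prems l unfolding jordan_bidiagonal_def by auto
      then show ?thesis by simp
    qed
  qed
  finally show ?case .
qed

lemma jordan_bidiagonal_power_diag:
  "i < n \<Longrightarrow> (J ^\<^sub>m k) $$ (i, i) = J $$ (i, i) ^ k"
proof (induction k)
  case 0
  then show ?case using J by auto
next
  case (Suc k)
  have "(J ^\<^sub>m Suc k) $$ (i, i) = (\<Sum>l<n. (J ^\<^sub>m k) $$ (i, l) * J $$ (l, i))"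
    using index_mult_mat_sum[of "J ^\<^sub>m k" n J i i] Suc.prems J by auto
  also have "\<dots> = (J ^\<^sub>m k) $$ (i, i) * J $$ (i, i)"
  proof (intro sum_eq_single)
    fix l assume l: "l \<in> {..<n}" "l \<noteq> i"
    show "(J ^\<^sub>m k) $$ (i, l) * J $$ (l, i) = 0"
    proof (cases "l < i")
      case True
      then show ?thesis using jordan_bidiagonal_power_below_diag Suc l by auto
    next
      case False
      then have "J $$ (l, i) = 0" using bidiag Suc.prems l unfolding jordan_bidiagonal_def by auto
      then show ?thesis by simp
    qed
  qed (use Suc in auto)
  finally show ?case using Suc by simp
qed

lemma jordan_bidiagonal_power_superdiag:
  assumes i: "Suc i < n" and one: "J $$ (i, Suc i) = 1"
  shows "(J ^\<^sub>m k) $$ (i, Suc i) = of_nat k * J $$ (i, i) ^ (k - 1)"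
proof (induction k)
  case 0
  then show ?case using J i by auto
next
  case (Suc k)
  have same_diag: "J $$ (Suc i, Suc i) = J $$ (i, i)"
    using bidiag[unfolded jordan_bidiagonal_def, rule_format, of i "Suc i"] i one by auto
  have "(J ^\<^sub>m Suc k) $$ (i, Suc i) = (\<Sum>l<n. (J ^\<^sub>m k) $$ (i, l) * J $$ (l, Suc i))"
    using index_mult_mat_sum[of "J ^\<^sub>m k" n J i "Suc i"] i J by auto
  also have "\<dots> = (J ^\<^sub>m k) $$ (i, i) * J $$ (i, Suc i) + (J ^\<^sub>m k) $$ (i, Suc i) * J $$ (Suc i, Suc i)"
  proof (intro sum_eq_two)
    fix l assume l: "l \<in> {..<n}" "l \<noteq> i" "l \<noteq> Suc i"
    show "(J ^\<^sub>m k) $$ (i, l) * J $$ (l, Suc i) = 0"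
    proof (cases "l < i")
      case True
      then show ?thesis using jordan_bidiagonal_power_below_diag i l by auto
    next
      case False
      then have "J $$ (l, Suc i) = 0" using bidiag i l unfolding jordan_bidiagonal_def by auto
      then show ?thesis by simp
    qed
  qed (use i in auto)
  also have "\<dots> = J $$ (i, i) ^ k + of_nat k * J $$ (i, i) ^ (k - 1) * J $$ (i, i)"
    using jordan_bidiagonal_power_diag[of i k] i one same_diag Suc by simp
  also have "\<dots> = of_nat (Suc k) * J $$ (i, i) ^ (Suc k - 1)"
    by (cases k) (auto simp: algebra_simps)
  finally show ?case .
qed

end

text \<open>Inside a Jordan block with \<open>|\<lambda>| \<ge> 1\<close> the superdiagonal entry \<open>k \<lambda>\<^sup>k\<^sup>-\<^sup>1\<close> of \<open>J\<^sup>k\<close> is unbounded.\<close>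

lemma power_bounded_jordan_bidiagonal:
  assumes J: "J \<in> carrier_mat n n" "jordan_bidiagonal J n"
    and bound: "\<And>k i j. i < n \<Longrightarrow> j < n \<Longrightarrow> cmod ((J ^\<^sub>m k) $$ (i, j)) \<le> C"
  shows "i < n \<Longrightarrow> cmod (J $$ (i, i)) \<le> 1"
    and "Suc i < n \<Longrightarrow> J $$ (i, Suc i) = 1 \<Longrightarrow> cmod (J $$ (i, i)) < 1"
proof -
  assume i: "i < n"
  show "cmod (J $$ (i, i)) \<le> 1"
  proof (rule ccontr)
    assume "\<not> ?thesis"
    then have "1 < cmod (J $$ (i, i))" by simp
    from real_arch_pow[OF this, of C] obtain k where "C < cmod (J $$ (i, i)) ^ k" by auto
    moreover have "cmod (J $$ (i, i)) ^ k \<le> C"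
      using bound[OF i i, of k] jordan_bidiagonal_power_diag[OF J i, of k] by (simp add: norm_power)
    ultimately show False by simp
  qed
next
  assume i: "Suc i < n" and one: "J $$ (i, Suc i) = 1"
  show "cmod (J $$ (i, i)) < 1"
  proof (rule ccontr)
    assume "\<not> ?thesis"
    then have ge1: "1 \<le> cmod (J $$ (i, i))" by simp
    define k where "k = Suc (nat (ceiling C))"
    have "cmod ((J ^\<^sub>m k) $$ (i, Suc i)) = real k * cmod (J $$ (i, i)) ^ (k - 1)"
      using jordan_bidiagonal_power_superdiag[OF J i one, of k] by (simp add: norm_mult norm_power)
    also have "\<dots> \<ge> real k" using ge1 one_le_power[OF ge1, of "k - 1"]
      by (metis mult_cancel_left1 mult_left_mono of_nat_0_le_iff)
    finally have "real k \<le> C" using bound[of i "Suc i" k] i by linarith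
    moreover have "C < real k" unfolding k_def by linarith
    ultimately show False by simp
  qed
qed

lemma entry_bound_mult3:
  assumes Q: "Q \<in> carrier_mat n n" and B: "B \<in> carrier_mat n n" and P: "P \<in> carrier_mat n n"
    and B_bound: "\<And>i j. i < n \<Longrightarrow> j < n \<Longrightarrow> cmod (B $$ (i, j)) \<le> 1"
    and i: "i < n" and j: "j < n"
  shows "cmod ((Q * B * P) $$ (i, j))
    \<le> (\<Sum>a<n. \<Sum>b<n. cmod (Q $$ (a, b))) * (\<Sum>c<n. \<Sum>d<n. cmod (P $$ (c, d)))"
proof -
  have "(Q * B * P) $$ (i, j) = (\<Sum>l<n. (Q * B) $$ (i, l) * P $$ (l, j))"
    using index_mult_mat_sum[of "Q * B" n P i j] Q B P i j by auto
  also have "\<dots> = (\<Sum>l<n. (\<Sum>r<n. Q $$ (i, r) * B $$ (r, l)) * P $$ (l, j))"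
    using index_mult_mat_sum[of Q n B i] Q B i by auto
  finally have eq: "(Q * B * P) $$ (i, j) = (\<Sum>l<n. (\<Sum>r<n. Q $$ (i, r) * B $$ (r, l)) * P $$ (l, j))" .
  have "cmod ((Q * B * P) $$ (i, j))
      \<le> (\<Sum>l<n. (\<Sum>r<n. cmod (Q $$ (i, r)) * cmod (B $$ (r, l))) * cmod (P $$ (l, j)))"
    unfolding eq
    by (rule order_trans[OF norm_sum], rule sum_mono, simp add: norm_mult,
        rule mult_right_mono, rule order_trans[OF norm_sum], auto simp: norm_mult)
  also have "\<dots> \<le> (\<Sum>l<n. (\<Sum>r<n. cmod (Q $$ (i, r))) * cmod (P $$ (l, j)))"
    by (intro sum_mono mult_right_mono) (auto intro!: mult_left_le B_bound)
  also have "\<dots> = (\<Sum>r<n. cmod (Q $$ (i, r))) * (\<Sum>l<n. cmod (P $$ (l, j)))"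
    by (rule sum_distrib_left[symmetric])
  also have "\<dots> \<le> (\<Sum>a<n. \<Sum>b<n. cmod (Q $$ (a, b))) * (\<Sum>c<n. \<Sum>d<n. cmod (P $$ (c, d)))"
  proof (rule mult_mono)
    show "(\<Sum>r<n. cmod (Q $$ (i, r))) \<le> (\<Sum>a<n. \<Sum>b<n. cmod (Q $$ (a, b)))"
      using i by (intro member_le_sum[where f = "\<lambda>a. \<Sum>b<n. cmod (Q $$ (a, b))"]) (auto intro: sum_nonneg)
    show "(\<Sum>l<n. cmod (P $$ (l, j))) \<le> (\<Sum>c<n. \<Sum>d<n. cmod (P $$ (c, d)))"
      using j by (intro sum_mono member_le_sum[where f = "\<lambda>d. cmod (P $$ (_, d))"]) auto
  qed (auto intro!: sum_nonneg)
  finally show ?thesis .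
qed

lemma power_bounded_jordan_form:
  fixes A :: "complex mat"
  assumes A: "A \<in> carrier_mat n n"
    and bound: "\<And>k i j. i < n \<Longrightarrow> j < n \<Longrightarrow> cmod ((A ^\<^sub>m k) $$ (i, j)) \<le> 1"
  obtains J P Q where "J \<in> carrier_mat n n" "P \<in> carrier_mat n n" "Q \<in> carrier_mat n n"
    "P * Q = 1\<^sub>m n" "Q * A = J * Q" "jordan_bidiagonal J n"
    "\<And>i. i < n \<Longrightarrow> cmod (J $$ (i, i)) \<le> 1"
    "\<And>i. Suc i < n \<Longrightarrow> J $$ (i, Suc i) = 1 \<Longrightarrow> cmod (J $$ (i, i)) < 1"
proof -
  from char_poly_factorized[OF A] obtain as where "char_poly A = (\<Prod>a \<leftarrow> as. [:- a, 1:])" by auto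
  from jordan_nf_exists[OF A this] obtain n_as where "jordan_nf A n_as" by auto
  define J where "J = jordan_matrix n_as"
  from \<open>jordan_nf A n_as\<close> obtain P Q where wit: "similar_mat_wit A J P Q"
    unfolding jordan_nf_def similar_mat_def J_def by auto
  note D = similar_mat_witD2[OF A wit]
  have Jc: "J \<in> carrier_mat n n" and Pc: "P \<in> carrier_mat n n" and Qc: "Q \<in> carrier_mat n n"
    using D by auto
  have "sum_list (map fst n_as) = n" using Jc unfolding J_def by auto
  then have bidiag: "jordan_bidiagonal J n" using jordan_matrix_bidiagonal[of n_as] unfolding J_def by simp
  have J_power: "J ^\<^sub>m k = Q * A ^\<^sub>m k * P" for k
    using similar_mat_witD2(3)[OF pow_carrier_mat[OF Jc]
        similar_mat_wit_pow[OF similar_mat_wit_sym[OF wit], of k]] .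
  define C where "C = (\<Sum>a<n. \<Sum>b<n. cmod (Q $$ (a, b))) * (\<Sum>c<n. \<Sum>d<n. cmod (P $$ (c, d)))"
  have J_bound: "cmod ((J ^\<^sub>m k) $$ (i, j)) \<le> C" if "i < n" "j < n" for k i j
    unfolding J_power C_def using that
    by (intro entry_bound_mult3[OF Qc pow_carrier_mat[OF A] Pc]) (auto intro: bound)
  have "Q * A = Q * (P * J * Q)" using D(3) by simp
  also have "\<dots> = (Q * P) * J * Q" using Qc Pc Jc by (simp add: assoc_mult_mat[of _ n n _ n _ n])
  also have "\<dots> = J * Q" using D(2) Jc Qc by simp
  finally have "Q * A = J * Q" .
  with that Jc Pc Qc D(1) bidiag power_bounded_jordan_bidiagonal[OF Jc bidiag J_bound]
  show ?thesis by blast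
qed

lemma jordan_bidiagonal_mult_row:
  fixes J Q :: "'a::comm_ring_1 mat"
  assumes J: "J \<in> carrier_mat n n" "jordan_bidiagonal J n" and Q: "Q \<in> carrier_mat n n"
    and i: "i < n" and k: "k < n"
  shows "(J * Q) $$ (i, k) = J $$ (i, i) * Q $$ (i, k)
    + (if Suc i < n then J $$ (i, Suc i) * Q $$ (Suc i, k) else 0)"
proof -
  have "(J * Q) $$ (i, k) = (\<Sum>l<n. J $$ (i, l) * Q $$ (l, k))"
    using index_mult_mat_sum[OF J(1) Q i k] .
  also have "\<dots> = J $$ (i, i) * Q $$ (i, k) + (if Suc i < n then J $$ (i, Suc i) * Q $$ (Suc i, k) else 0)"
    using J(2) i unfolding jordan_bidiagonal_def
    by (cases "Suc i < n") (auto intro!: sum_eq_two sum_eq_single)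
  finally show ?thesis .
qed

text \<open>Row \<open>i\<close> of \<open>S\<close> is row \<open>i\<close> of the Jordan basis matrix scaled by \<open>\<epsilon>\<^sup>-\<^sup>i\<close>, which turns the
  superdiagonal ones of the Jordan form into \<open>\<epsilon>\<close>; \<open>\<epsilon>\<close> is chosen below the gap \<open>1 - |\<lambda>|\<close> of every
  eigenvalue inside the unit disc.\<close>

lemma power_bounded_scaled_jordan_form:
  fixes A :: "complex mat"
  assumes A: "A \<in> carrier_mat n n"
    and bound: "\<And>k i j. i < n \<Longrightarrow> j < n \<Longrightarrow> cmod ((A ^\<^sub>m k) $$ (i, j)) \<le> 1"
  obtains S T lam bet where "S \<in> carrier_mat n n" "T \<in> carrier_mat n n" "T * S = 1\<^sub>m n"
    "\<And>i k. i < n \<Longrightarrow> k < n \<Longrightarrow>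
       (S * A) $$ (i, k) = lam i * S $$ (i, k) + complex_of_real (bet i) * (if Suc i < n then S $$ (Suc i, k) else 0)"
    "\<And>i. i < n \<Longrightarrow> 0 \<le> bet i \<and> cmod (lam i) + bet i \<le> 1"
    "\<And>i. Suc i < n \<Longrightarrow> cmod (lam (Suc i)) + bet i \<le> 1"
proof -
  obtain J P Q where Jc: "J \<in> carrier_mat n n" and Pc: "P \<in> carrier_mat n n" and Qc: "Q \<in> carrier_mat n n"
    and PQ: "P * Q = 1\<^sub>m n" and QA: "Q * A = J * Q" and bidiag: "jordan_bidiagonal J n"
    and diag_le: "\<And>i. i < n \<Longrightarrow> cmod (J $$ (i, i)) \<le> 1"
    and diag_less: "\<And>i. Suc i < n \<Longrightarrow> J $$ (i, Suc i) = 1 \<Longrightarrow> cmod (J $$ (i, i)) < 1"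
    using power_bounded_jordan_form[OF A bound] by blast
  obtain e where e_pos: "0 < e" and e_le: "\<And>i. i < n \<Longrightarrow> cmod (J $$ (i, i)) < 1 \<Longrightarrow> e \<le> 1 - cmod (J $$ (i, i))"
  proof
    let ?E = "insert 1 {1 - cmod (J $$ (i, i)) | i. i < n \<and> cmod (J $$ (i, i)) < 1}"
    show "0 < Min ?E" by auto
    show "Min ?E \<le> 1 - cmod (J $$ (i, i))" if "i < n" "cmod (J $$ (i, i)) < 1" for i
      using that by (intro Min_le) auto
  qed
  define S where "S = Matrix.mat n n (\<lambda>(i, k). complex_of_real ((1 / e) ^ i) * Q $$ (i, k))"
  define T where "T = Matrix.mat n n (\<lambda>(k, i). P $$ (k, i) * complex_of_real (e ^ i))"
  define bet where "bet i = (if Suc i < n \<and> J $$ (i, Suc i) = 1 then e else 0)" for i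
  have Sc: "S \<in> carrier_mat n n" and Tc: "T \<in> carrier_mat n n" unfolding S_def T_def by auto
  have "T * S = 1\<^sub>m n"
  proof (rule eq_matI)
    fix k j assume k: "k < dim_row (1\<^sub>m n)" and j: "j < dim_col (1\<^sub>m n)"
    have "(T * S) $$ (k, j) = (\<Sum>l<n. T $$ (k, l) * S $$ (l, j))"
      using index_mult_mat_sum[OF Tc Sc] k j by auto
    also have "\<dots> = (\<Sum>l<n. P $$ (k, l) * Q $$ (l, j))"
      using k j e_pos by (intro sum.cong) (auto simp: T_def S_def power_one_over field_simps)
    also have "\<dots> = 1\<^sub>m n $$ (k, j)" using index_mult_mat_sum[OF Pc Qc] k j PQ by auto
    finally show "(T * S) $$ (k, j) = 1\<^sub>m n $$ (k, j)" .
  qed (use Tc Sc in auto)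
  moreover have "(S * A) $$ (i, k) = J $$ (i, i) * S $$ (i, k)
      + complex_of_real (bet i) * (if Suc i < n then S $$ (Suc i, k) else 0)"
    if i: "i < n" and k: "k < n" for i k
  proof -
    have "(S * A) $$ (i, k) = (\<Sum>l<n. S $$ (i, l) * A $$ (l, k))"
      using index_mult_mat_sum[OF Sc A] i k by auto
    also have "\<dots> = complex_of_real ((1 / e) ^ i) * (J * Q) $$ (i, k)"
      using i k index_mult_mat_sum[OF Qc A i k]
      by (auto simp: S_def sum_distrib_left mult.assoc QA[symmetric] intro!: sum.cong)
    finally show ?thesis
      using jordan_bidiagonal_mult_row[OF Jc bidiag Qc i k] i k e_pos
        bidiag[unfolded jordan_bidiagonal_def, rule_format, of i "Suc i"]
      by (auto simp: S_def bet_def field_simps power_one_over)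
  qed
  moreover have "0 \<le> bet i \<and> cmod (J $$ (i, i)) + bet i \<le> 1" if "i < n" for i
    using e_pos diag_le[OF that] diag_less[of i] e_le[OF that] unfolding bet_def by auto
  moreover have "cmod (J $$ (Suc i, Suc i)) + bet i \<le> 1" if "Suc i < n" for i
  proof (cases "J $$ (i, Suc i) = 1")
    case True
    then have "J $$ (Suc i, Suc i) = J $$ (i, i)"
      using bidiag[unfolded jordan_bidiagonal_def, rule_format, of i "Suc i"] that by auto
    then show ?thesis using True that diag_less[OF that True] e_le[of i] unfolding bet_def by auto
  next
    case False
    then show ?thesis using diag_le[OF that] unfolding bet_def by auto
  qed
  ultimately show ?thesis using that[of S T "\<lambda>i. J $$ (i, i)" bet] Sc Tc by blast
qed

lemma stochastic_mat_power:
  fixes R :: "real mat"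
  assumes R: "R \<in> carrier_mat n n" and nonneg: "\<And>i j. i < n \<Longrightarrow> j < n \<Longrightarrow> 0 \<le> R $$ (i, j)"
    and row_sum: "\<And>i. i < n \<Longrightarrow> (\<Sum>j<n. R $$ (i, j)) = 1"
  shows "(\<forall>i<n. \<forall>j<n. 0 \<le> (R ^\<^sub>m k) $$ (i, j)) \<and> (\<forall>i<n. (\<Sum>j<n. (R ^\<^sub>m k) $$ (i, j)) = 1)"
proof (induction k)
  case 0
  have "(\<Sum>j<n. (1\<^sub>m n :: real mat) $$ (i, j)) = 1" if "i < n" for i
    using that by (subst sum_eq_single[of _ i]) auto
  then show ?case using R by auto
next
  case (Suc k)
  have entry: "(R ^\<^sub>m Suc k) $$ (i, j) = (\<Sum>l<n. (R ^\<^sub>m k) $$ (i, l) * R $$ (l, j))"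
    if "i < n" "j < n" for i j
    using index_mult_mat_sum[of "R ^\<^sub>m k" n R i j] that R by auto
  have "(\<Sum>j<n. (R ^\<^sub>m Suc k) $$ (i, j)) = 1" if i: "i < n" for i
  proof -
    have "(\<Sum>j<n. (R ^\<^sub>m Suc k) $$ (i, j)) = (\<Sum>j<n. \<Sum>l<n. (R ^\<^sub>m k) $$ (i, l) * R $$ (l, j))"
      using i by (intro sum.cong refl entry) auto
    also have "\<dots> = (\<Sum>l<n. (R ^\<^sub>m k) $$ (i, l) * (\<Sum>j<n. R $$ (l, j)))"
      by (subst sum.swap) (simp add: sum_distrib_left)
    also have "\<dots> = 1" using Suc i by (simp add: row_sum)
    finally show ?thesis .
  qed
  moreover have "0 \<le> (R ^\<^sub>m Suc k) $$ (i, j)" if "i < n" "j < n" for i j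
    unfolding entry[OF that] using Suc nonneg that by (auto intro!: sum_nonneg)
  ultimately show ?case by blast
qed

lemma stochastic_mat_power_bound:
  fixes R :: "real mat"
  assumes R: "R \<in> carrier_mat n n" and nonneg: "\<And>i j. i < n \<Longrightarrow> j < n \<Longrightarrow> 0 \<le> R $$ (i, j)"
    and row_sum: "\<And>i. i < n \<Longrightarrow> (\<Sum>j<n. R $$ (i, j)) = 1"
    and i: "i < n" and j: "j < n"
  shows "cmod ((map_mat complex_of_real R ^\<^sub>m k) $$ (i, j)) \<le> 1"
proof -
  note power = stochastic_mat_power[OF R nonneg row_sum, of k]
  have "(R ^\<^sub>m k) $$ (i, j) \<le> (\<Sum>j<n. (R ^\<^sub>m k) $$ (i, j))"
    using power i j by (intro member_le_sum) auto
  then have le: "(R ^\<^sub>m k) $$ (i, j) \<le> 1" using power i by auto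
  have "map_mat complex_of_real R ^\<^sub>m k = map_mat complex_of_real (R ^\<^sub>m k)"
    using of_real_hom.mat_hom_pow[OF R] by metis
  then show ?thesis using le power i j R by auto
qed

hide_const (open) Matrix.mat
no_notation Matrix.vec_index (infixl \<open>$\<close> 100)

lemma QbarD:
  assumes "Q \<in> Qbar"
  shows "transpose Q = Q" "0 \<le> v \<bullet> (Q *v v)" "norm (Q *v v) \<le> norm v"
proof -
  show "transpose Q = Q" "0 \<le> v \<bullet> (Q *v v)" using assms unfolding Qbar_def by auto
  have "norm (Q *v v) \<le> onorm (\<lambda>v. Q *v v) * norm v"
    by (rule onorm) simp
  also have "\<dots> \<le> 1 * norm v" using assms unfolding Qbar_def by (intro mult_right_mono) auto
  finally show "norm (Q *v v) \<le> norm v" by simp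
qed

lemma Qbar_inner_commute: "Q \<in> Qbar \<Longrightarrow> a \<bullet> (Q *v b) = b \<bullet> (Q *v a)"
  by (metis QbarD(1) dot_lmul_matrix inner_commute vector_transpose_matrix)

text \<open>\<open>Q\<^sup>2 \<le> Q\<close> for \<open>0 \<le> Q \<le> I\<close>: expand \<open>\<langle>w - Qw, Q(w - Qw)\<rangle> \<ge> 0\<close> and use \<open>\<langle>Qw, Q\<^sup>2w\<rangle> \<le> |Qw|\<^sup>2\<close>.\<close>

lemma Qbar_norm_sq_le_quadratic_form:
  assumes Q: "Q \<in> Qbar"
  shows "(norm (Q *v w))\<^sup>2 \<le> w \<bullet> (Q *v w)"
proof -
  define a where "a = Q *v w"
  have aa: "(norm a)\<^sup>2 = w \<bullet> (Q *v a)"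
    unfolding a_def power2_norm_eq_inner using Qbar_inner_commute[OF Q, of "Q *v w" w] by simp
  have "(w - a) \<bullet> (Q *v (w - a)) = w \<bullet> (Q *v w) - 2 * (w \<bullet> (Q *v a)) + a \<bullet> (Q *v a)"
    using Qbar_inner_commute[OF Q, of a w]
    by (simp add: matrix_vector_mult_diff_distrib inner_diff_left inner_diff_right)
  moreover have "a \<bullet> (Q *v a) \<le> (norm a)\<^sup>2"
  proof -
    have "a \<bullet> (Q *v a) \<le> norm a * norm (Q *v a)"
      by (rule Cauchy_Schwarz_ineq2[THEN order_trans[OF abs_ge_self]])
    also have "\<dots> \<le> norm a * norm a" using QbarD(3)[OF Q] by (intro mult_left_mono) auto
    finally show ?thesis by (simp add: power2_eq_square)
  qed
  ultimately show ?thesis using QbarD(2)[OF Q, of "w - a"] aa unfolding a_def by linarith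
qed

text \<open>The coordinates \<open>y\<^sub>i\<close> are complex, so \<open>Q\<close> acts on complex vectors through its
  complexification; all needed facts follow by splitting into real and imaginary parts.\<close>

definition cmat :: "real^'n^'m \<Rightarrow> complex^'n^'m" where
  "cmat Q = (\<chi> i j. complex_of_real (Q $ i $ j))"

definition vec_Re :: "complex^'n \<Rightarrow> real^'n" where
  "vec_Re a = (\<chi> i. Re (a $ i))"

definition vec_Im :: "complex^'n \<Rightarrow> real^'n" where
  "vec_Im a = (\<chi> i. Im (a $ i))"

lemma inner_vec_Re_Im: "inner a b = vec_Re a \<bullet> vec_Re b + vec_Im a \<bullet> vec_Im b"
  by (simp add: inner_vec_def inner_complex_def vec_Re_def vec_Im_def sum.distrib)

lemma norm_sq_vec_Re_Im: "(norm a)\<^sup>2 = (norm (vec_Re a))\<^sup>2 + (norm (vec_Im a))\<^sup>2"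
  by (simp add: power2_norm_eq_inner inner_vec_Re_Im)

lemma vec_Re_cmat_mult: "vec_Re (cmat Q *v a) = Q *v vec_Re a"
  and vec_Im_cmat_mult: "vec_Im (cmat Q *v a) = Q *v vec_Im a"
  by (simp_all add: Finite_Cartesian_Product.vec_eq_iff vec_Re_def vec_Im_def cmat_def matrix_vector_mult_def Re_sum Im_sum)

lemma cmat_Qbar_inner_commute: "Q \<in> Qbar \<Longrightarrow> inner a (cmat Q *v b) = inner b (cmat Q *v a)"
  by (simp add: inner_vec_Re_Im vec_Re_cmat_mult vec_Im_cmat_mult Qbar_inner_commute)

lemma cmat_Qbar_nonneg: "Q \<in> Qbar \<Longrightarrow> 0 \<le> inner a (cmat Q *v a)"
  by (simp add: inner_vec_Re_Im vec_Re_cmat_mult vec_Im_cmat_mult QbarD(2))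

lemma cmat_Qbar_norm_sq_le_quadratic_form:
  "Q \<in> Qbar \<Longrightarrow> (norm (cmat Q *v w))\<^sup>2 \<le> inner w (cmat Q *v w)"
  using Qbar_norm_sq_le_quadratic_form[of Q "vec_Re w"] Qbar_norm_sq_le_quadratic_form[of Q "vec_Im w"]
  by (simp add: norm_sq_vec_Re_Im inner_vec_Re_Im vec_Re_cmat_mult vec_Im_cmat_mult)

lemma matrix_vector_mult_smult: "A *v (c *s a) = c *s (A *v a)"
  for A :: "'a::comm_semiring_1^'n^'m"
  by (simp add: Finite_Cartesian_Product.vec_eq_iff matrix_vector_mult_def sum_distrib_left mult.left_commute)

lemma inner_smult_smult: "inner (c *s a) (c *s b) = (cmod c)\<^sup>2 * inner a b"
  for a b :: "complex^'n"
proof -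
  have "inner (c * x) (c * y) = (cmod c)\<^sup>2 * inner x y" for x y :: complex
    unfolding inner_complex_def cmod_power2 by (simp add: algebra_simps power2_eq_square)
  then show ?thesis by (simp add: inner_vec_def sum_distrib_left)
qed

lemma cmat_Qbar_step_norm_sq:
  assumes Q: "Q \<in> Qbar"
  shows "(norm (u + cmat Q *v (v - u)))\<^sup>2 \<le> (norm u)\<^sup>2 - inner u (cmat Q *v u) + inner v (cmat Q *v v)"
proof -
  let ?F = "\<lambda>v. cmat Q *v v"
  define w where "w = v - u"
  have v: "v = u + w" unfolding w_def by simp
  have "(norm (u + ?F w))\<^sup>2 = (norm u)\<^sup>2 + 2 * inner u (?F w) + (norm (?F w))\<^sup>2"
    by (simp add: power2_norm_eq_inner inner_add_left inner_add_right inner_commute)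
  moreover have "inner v (?F v) = inner u (?F u) + 2 * inner u (?F w) + inner w (?F w)"
    unfolding v using cmat_Qbar_inner_commute[OF Q, of w u]
    by (simp add: matrix_vector_right_distrib inner_add_left inner_add_right)
  ultimately show ?thesis using cmat_Qbar_norm_sq_le_quadratic_form[OF Q, of w] unfolding w_def by linarith
qed

lemma inner_of_real_smult_left: "inner (complex_of_real r *s u) v = r * inner u v"
  and inner_of_real_smult_right: "inner u (complex_of_real r *s v) = r * inner u v"
  for u v :: "complex^'n"
  by (simp_all add: inner_vec_def inner_complex_def sum_distrib_left algebra_simps)

text \<open>The cross term is bounded by \<open>2 \<langle>u, Q v\<rangle> \<le> \<langle>u, Q u\<rangle> + \<langle>v, Q v\<rangle>\<close>, i.e. by \<open>\<langle>u - v, Q (u - v)\<rangle> \<ge> 0\<close>.\<close>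

lemma cmat_Qbar_quadratic_form_convex:
  assumes Q: "Q \<in> Qbar" and r: "0 \<le> r" and t: "0 \<le> t" and rt: "r + t \<le> 1"
  shows "inner (of_real r *s u + of_real t *s v) (cmat Q *v (of_real r *s u + of_real t *s v))
    \<le> r * inner u (cmat Q *v u) + t * inner v (cmat Q *v v)"
proof -
  let ?q = "\<lambda>w. inner w (cmat Q *v w)"
  have "0 \<le> ?q (u - v)" by (rule cmat_Qbar_nonneg[OF Q])
  then have cross: "2 * inner u (cmat Q *v v) \<le> ?q u + ?q v"
    using cmat_Qbar_inner_commute[OF Q, of v u]
    by (simp add: matrix_vector_mult_diff_distrib inner_diff_left inner_diff_right)
  have "?q (of_real r *s u + of_real t *s v) = r\<^sup>2 * ?q u + r * t * (2 * inner u (cmat Q *v v)) + t\<^sup>2 * ?q v"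
    using cmat_Qbar_inner_commute[OF Q, of v u]
    by (simp add: matrix_vector_right_distrib matrix_vector_mult_smult inner_add_left inner_add_right
        inner_of_real_smult_left inner_of_real_smult_right power2_eq_square algebra_simps)
  also have "\<dots> \<le> r\<^sup>2 * ?q u + r * t * (?q u + ?q v) + t\<^sup>2 * ?q v"
    using cross r t by (intro add_mono mult_left_mono) auto
  also have "\<dots> = (r + t) * (r * ?q u + t * ?q v)" by (simp add: power2_eq_square algebra_simps)
  also have "\<dots> \<le> r * ?q u + t * ?q v"
    using rt r t cmat_Qbar_nonneg[OF Q] by (intro mult_left_le_one_le add_nonneg_nonneg mult_nonneg_nonneg) auto
  finally show ?thesis .
qed

lemma cmat_Qbar_quadratic_form_comb:
  assumes Q: "Q \<in> Qbar" and b: "0 \<le> \<beta>" and l: "cmod l + \<beta> \<le> 1"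
  shows "inner (l *s a + of_real \<beta> *s c) (cmat Q *v (l *s a + of_real \<beta> *s c))
     \<le> cmod l * inner a (cmat Q *v a) + \<beta> * inner c (cmat Q *v c)"
proof -
  let ?q = "\<lambda>w. inner w (cmat Q *v w)"
  have polar: "l *s a = of_real (cmod l) *s (sgn l *s a)"
    by (cases "l = 0") (simp_all add: vector_smult_assoc complex_sgn_def scaleR_conv_of_real)
  have "?q (l *s a + of_real \<beta> *s c) \<le> cmod l * ?q (sgn l *s a) + \<beta> * ?q c"
    unfolding polar by (rule cmat_Qbar_quadratic_form_convex[OF Q _ b l]) simp
  also have "?q (sgn l *s a) \<le> ?q a"
    using cmat_Qbar_nonneg[OF Q, of a]
    by (simp add: matrix_vector_mult_smult inner_smult_smult norm_sgn mult_left_le_one_le)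
  finally show ?thesis by (simp add: mult_left_mono)
qed

lemma sum_UNIV_pair: "(\<Sum>r\<in>UNIV. f r) = (\<Sum>a\<in>UNIV. \<Sum>b\<in>UNIV. f (a, b))"
  for f :: "'a::finite \<times> 'b::finite \<Rightarrow> 'c::comm_monoid_add"
  by (simp add: sum.cartesian_product split_def flip: UNIV_Times_UNIV)

lemma kron_mult: "kron A B ** kron C D = kron (A ** C) (B ** D)"
  by (simp add: Finite_Cartesian_Product.vec_eq_iff kron_def matrix_matrix_mult_def sum_UNIV_pair sum_product ac_simps)

lemma interconnection_update_factor:
  "(mat 1 + kron (\<Lambda> - mat 1) Q) *v x = x + kron (mat 1) Q *v (kron (\<Lambda> - mat 1) (mat 1) *v x)"
  by (simp add: kron_mult matrix_vector_mult_add_rdistrib matrix_vector_mul_assoc)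

definition block_comb :: "('p::finite \<Rightarrow> complex) \<Rightarrow> real^('p \<times> 'n::finite) \<Rightarrow> complex^'n" where
  "block_comb s x = (\<chi> c. \<Sum>l\<in>UNIV. s l * complex_of_real (x $ (l, c)))"

lemma block_comb_add: "block_comb s (x + y) = block_comb s x + block_comb s y"
  by (simp add: Finite_Cartesian_Product.vec_eq_iff block_comb_def distrib_left sum.distrib)

lemma block_comb_linear:
  "block_comb (\<lambda>l. a * s l + b * t l) x = a *s block_comb s x + b *s block_comb t x"
  by (simp add: Finite_Cartesian_Product.vec_eq_iff block_comb_def sum.distrib sum_distrib_left algebra_simps)

lemma block_comb_diff: "block_comb (\<lambda>l. s l - t l) x = block_comb s x - block_comb t x"
  by (simp add: Finite_Cartesian_Product.vec_eq_iff block_comb_def left_diff_distrib sum_subtractf)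

lemma block_comb_smult: "block_comb (\<lambda>l. a * s l) x = a *s block_comb s x"
  by (simp add: Finite_Cartesian_Product.vec_eq_iff block_comb_def sum_distrib_left ac_simps)

lemma kron_mat1_left_mult_component: "(kron (mat 1) Q *v x) $ (l, c) = (\<Sum>d\<in>UNIV. Q $ c $ d * x $ (l, d))"
  by (simp add: kron_def Finite_Cartesian_Product.mat_def matrix_vector_mult_def sum_UNIV_pair if_distrib[of "\<lambda>t. t * _"]
      sum.swap[where A = UNIV] cong: if_cong)

lemma kron_mat1_right_mult_component:
  "(kron A (mat 1) *v x) $ (l, c) = (\<Sum>l'\<in>UNIV. A $ l $ l' * x $ (l', c))"
  by (simp add: kron_def Finite_Cartesian_Product.mat_def matrix_vector_mult_def sum_UNIV_pair if_distrib[of "\<lambda>t. t * _"]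
      if_distrib[of "\<lambda>t. _ * t"] cong: if_cong)

lemma block_comb_kron_mat1_left: "block_comb s (kron (mat 1) Q *v x) = cmat Q *v block_comb s x"
proof (rule Finite_Cartesian_Product.vec_eq_iff[THEN iffD2], rule allI)
  fix c
  have "block_comb s (kron (mat 1) Q *v x) $ c
      = (\<Sum>l\<in>UNIV. \<Sum>d\<in>UNIV. s l * (complex_of_real (Q $ c $ d) * complex_of_real (x $ (l, d))))"
    by (simp add: block_comb_def kron_mat1_left_mult_component sum_distrib_left)
  also have "\<dots> = (\<Sum>d\<in>UNIV. \<Sum>l\<in>UNIV. s l * (complex_of_real (Q $ c $ d) * complex_of_real (x $ (l, d))))"
    by (rule sum.swap)
  also have "\<dots> = (cmat Q *v block_comb s x) $ c"
    by (simp add: matrix_vector_mult_def cmat_def block_comb_def sum_distrib_left ac_simps)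
  finally show "block_comb s (kron (mat 1) Q *v x) $ c = (cmat Q *v block_comb s x) $ c" .
qed

lemma block_comb_kron_mat1_right:
  "block_comb s (kron A (mat 1) *v x) = block_comb (\<lambda>l. \<Sum>l'\<in>UNIV. s l' * complex_of_real (A $ l' $ l)) x"
proof (rule Finite_Cartesian_Product.vec_eq_iff[THEN iffD2], rule allI)
  fix c
  have "block_comb s (kron A (mat 1) *v x) $ c
      = (\<Sum>l\<in>UNIV. \<Sum>l'\<in>UNIV. s l * (complex_of_real (A $ l $ l') * complex_of_real (x $ (l', c))))"
    by (simp add: block_comb_def kron_mat1_right_mult_component sum_distrib_left)
  also have "\<dots> = (\<Sum>l'\<in>UNIV. \<Sum>l\<in>UNIV. s l * (complex_of_real (A $ l $ l') * complex_of_real (x $ (l', c))))"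
    by (rule sum.swap)
  also have "\<dots> = block_comb (\<lambda>l. \<Sum>l'\<in>UNIV. s l' * complex_of_real (A $ l' $ l)) x $ c"
    by (simp add: block_comb_def sum_distrib_left ac_simps)
  finally show "block_comb s (kron A (mat 1) *v x) $ c
      = block_comb (\<lambda>l. \<Sum>l'\<in>UNIV. s l' * complex_of_real (A $ l' $ l)) x $ c" .
qed

lemma block_comb_interconnection_update:
  fixes \<Lambda> :: "real^'p::finite^'p" and Q :: "real^'n::finite^'n"
  shows "block_comb s ((mat 1 + kron (\<Lambda> - mat 1) Q) *v x) =
    block_comb s x + cmat Q *v (block_comb (\<lambda>l. \<Sum>l'\<in>UNIV. s l' * complex_of_real (\<Lambda> $ l' $ l)) x - block_comb s x)"
proof -
  have "(\<lambda>l. \<Sum>l'\<in>UNIV. s l' * complex_of_real ((\<Lambda> - mat 1) $ l' $ l))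
      = (\<lambda>l. (\<Sum>l'\<in>UNIV. s l' * complex_of_real (\<Lambda> $ l' $ l)) - s l)"
    by (simp add: Finite_Cartesian_Product.mat_def right_diff_distrib sum_subtractf if_distrib[of complex_of_real]
        if_distrib[of "\<lambda>t. _ * t"] cong: if_cong)
  then show ?thesis
    by (simp only: interconnection_update_factor block_comb_add block_comb_kron_mat1_left
        block_comb_kron_mat1_right block_comb_diff)
qed

lemma sum_shifted_weights_le:
  fixes b c f :: "nat \<Rightarrow> real"
  assumes b: "\<And>i. Suc i < m \<Longrightarrow> b i \<le> c (Suc i)" and c0: "0 < m \<Longrightarrow> 0 \<le> c 0"
    and f: "\<And>i. 0 \<le> f i"
  shows "(\<Sum>i<m. b i * (if Suc i < m then f (Suc i) else 0)) \<le> (\<Sum>i<m. c i * f i)"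
proof (cases m)
  case 0
  then show ?thesis by simp
next
  case (Suc m')
  have "(\<Sum>i<m. b i * (if Suc i < m then f (Suc i) else 0)) = (\<Sum>i<m'. b i * f (Suc i))"
    unfolding Suc by simp
  also have "\<dots> \<le> (\<Sum>i<m'. c (Suc i) * f (Suc i))"
    using b f Suc by (intro sum_mono mult_right_mono) auto
  also have "\<dots> \<le> c 0 * f 0 + (\<Sum>i<m'. c (Suc i) * f (Suc i))"
    using c0 f Suc by simp
  also have "\<dots> = (\<Sum>i<m. c i * f i)"
    unfolding Suc by (rule sum.lessThan_Suc_shift[symmetric])
  finally show ?thesis .
qed

lemma sum_block_comb_norm_sq_nonincreasing:
  fixes \<Lambda> :: "real^'p::finite^'p" and Q :: "real^'n::finite^'n" and x :: "real^('p \<times> 'n)"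
    and s :: "nat \<Rightarrow> 'p \<Rightarrow> complex"
  assumes Q: "Q \<in> Qbar"
    and left_chain: "\<And>i. i < m \<Longrightarrow> (\<lambda>l. \<Sum>l'\<in>UNIV. s i l' * complex_of_real (\<Lambda> $ l' $ l)) =
         (\<lambda>l. lam i * s i l + complex_of_real (bet i) * (if Suc i < m then s (Suc i) l else 0))"
    and weights: "\<And>i. i < m \<Longrightarrow> 0 \<le> bet i \<and> cmod (lam i) + bet i \<le> 1"
    and weights_shift: "\<And>i. Suc i < m \<Longrightarrow> cmod (lam (Suc i)) + bet i \<le> 1"
  shows "(\<Sum>i<m. (norm (block_comb (s i) ((mat 1 + kron (\<Lambda> - mat 1) Q) *v x)))\<^sup>2)
    \<le> (\<Sum>i<m. (norm (block_comb (s i) x))\<^sup>2)"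
proof -
  define y where "y i = block_comb (s i) x" for i
  define y_next where "y_next i = (if Suc i < m then y (Suc i) else 0)" for i
  define q where "q v = inner v (cmat Q *v v)" for v
  have q_nonneg: "0 \<le> q v" for v unfolding q_def by (rule cmat_Qbar_nonneg[OF Q])
  have step: "(norm (block_comb (s i) ((mat 1 + kron (\<Lambda> - mat 1) Q) *v x)))\<^sup>2
      \<le> (norm (y i))\<^sup>2 - (1 - cmod (lam i)) * q (y i) + bet i * q (y_next i)" if i: "i < m" for i
  proof -
    have z: "block_comb (\<lambda>l. \<Sum>l'\<in>UNIV. s i l' * complex_of_real (\<Lambda> $ l' $ l)) x
        = lam i *s y i + complex_of_real (bet i) *s y_next i"
      unfolding left_chain[OF i] y_def y_next_def
      by (cases "Suc i < m") (simp_all add: block_comb_linear block_comb_smult)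
    have "(norm (block_comb (s i) ((mat 1 + kron (\<Lambda> - mat 1) Q) *v x)))\<^sup>2
        \<le> (norm (y i))\<^sup>2 - q (y i) + q (lam i *s y i + complex_of_real (bet i) *s y_next i)"
      unfolding block_comb_interconnection_update z q_def y_def[symmetric]
      by (rule cmat_Qbar_step_norm_sq[OF Q])
    also have "q (lam i *s y i + complex_of_real (bet i) *s y_next i) \<le> cmod (lam i) * q (y i) + bet i * q (y_next i)"
      unfolding q_def using weights[OF i] by (intro cmat_Qbar_quadratic_form_comb[OF Q]) auto
    finally show ?thesis by (simp add: algebra_simps)
  qed
  have "q (y_next i) = (if Suc i < m then q (y (Suc i)) else 0)" for i
    unfolding y_next_def q_def by simp
  then have "(\<Sum>i<m. bet i * q (y_next i)) = (\<Sum>i<m. bet i * (if Suc i < m then q (y (Suc i)) else 0))"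
    by simp
  also have "\<dots> \<le> (\<Sum>i<m. (1 - cmod (lam i)) * q (y i))"
  proof (rule sum_shifted_weights_le)
    show "bet i \<le> 1 - cmod (lam (Suc i))" if "Suc i < m" for i
      using weights_shift[OF that] by simp
  qed (use weights[of 0] q_nonneg in auto)
  finally have telescope: "(\<Sum>i<m. bet i * q (y_next i)) \<le> (\<Sum>i<m. (1 - cmod (lam i)) * q (y i))" .
  have "(\<Sum>i<m. (norm (block_comb (s i) ((mat 1 + kron (\<Lambda> - mat 1) Q) *v x)))\<^sup>2)
      \<le> (\<Sum>i<m. (norm (y i))\<^sup>2 - (1 - cmod (lam i)) * q (y i) + bet i * q (y_next i))"
    by (rule sum_mono) (rule step, simp)
  also have "\<dots> \<le> (\<Sum>i<m. (norm (y i))\<^sup>2)"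
    using telescope by (simp add: sum.distrib sum_subtractf)
  finally show ?thesis unfolding y_def .
qed

lemma cmod_sum_mult_sq_le:
  "(cmod (\<Sum>i\<in>I. a i * b i))\<^sup>2 \<le> (\<Sum>i\<in>I. (cmod (a i))\<^sup>2) * (\<Sum>i\<in>I. (cmod (b i))\<^sup>2)"
proof -
  have "cmod (\<Sum>i\<in>I. a i * b i) \<le> (\<Sum>i\<in>I. cmod (a i) * cmod (b i))"
    by (rule order_trans[OF norm_sum]) (simp add: norm_mult)
  then have "(cmod (\<Sum>i\<in>I. a i * b i))\<^sup>2 \<le> (\<Sum>i\<in>I. cmod (a i) * cmod (b i))\<^sup>2"
    by (intro power_mono) auto
  also have "\<dots> \<le> (\<Sum>i\<in>I. (cmod (a i))\<^sup>2) * (\<Sum>i\<in>I. (cmod (b i))\<^sup>2)"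
    by (rule Cauchy_Schwarz_ineq_sum)
  finally show ?thesis .
qed

lemma norm_sq_vec_pair: "(norm x)\<^sup>2 = (\<Sum>l\<in>UNIV. \<Sum>c\<in>UNIV. (x $ (l, c))\<^sup>2)"
  for x :: "real^('p::finite \<times> 'n::finite)"
  unfolding power2_norm_eq_inner inner_vec_def by (simp add: sum_UNIV_pair power2_eq_square)

lemma norm_sq_complex_vec: "(norm v)\<^sup>2 = (\<Sum>c\<in>UNIV. (cmod (v $ c))\<^sup>2)"
  for v :: "complex^'n::finite"
  by (simp add: power2_norm_eq_inner inner_vec_def)

lemma block_comb_norm_sq_le: "(norm (block_comb s x))\<^sup>2 \<le> (\<Sum>l\<in>UNIV. (cmod (s l))\<^sup>2) * (norm x)\<^sup>2"
proof -
  have "(norm (block_comb s x))\<^sup>2 = (\<Sum>c\<in>UNIV. (cmod (\<Sum>l\<in>UNIV. s l * complex_of_real (x $ (l, c))))\<^sup>2)"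
    by (simp add: norm_sq_complex_vec block_comb_def)
  also have "\<dots> \<le> (\<Sum>c\<in>UNIV. (\<Sum>l\<in>UNIV. (cmod (s l))\<^sup>2) * (\<Sum>l\<in>UNIV. (cmod (complex_of_real (x $ (l, c))))\<^sup>2))"
    by (intro sum_mono cmod_sum_mult_sq_le)
  also have "\<dots> = (\<Sum>l\<in>UNIV. (cmod (s l))\<^sup>2) * (\<Sum>c\<in>UNIV. \<Sum>l\<in>UNIV. (x $ (l, c))\<^sup>2)"
    by (simp add: sum_distrib_left)
  also have "(\<Sum>c\<in>UNIV. \<Sum>l\<in>UNIV. (x $ (l, c))\<^sup>2) = (norm x)\<^sup>2"
    unfolding norm_sq_vec_pair by (rule sum.swap)
  finally show ?thesis .
qed

lemma block_comb_inversion: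
  assumes biorth: "\<And>l l'. (\<Sum>i<m. t l i * s i l') = (if l = l' then 1 else 0)"
  shows "complex_of_real (x $ (l, c)) = (\<Sum>i<m. t l i * block_comb (s i) x $ c)"
proof -
  have "(\<Sum>i<m. t l i * block_comb (s i) x $ c)
      = (\<Sum>i<m. \<Sum>l'\<in>UNIV. t l i * s i l' * complex_of_real (x $ (l', c)))"
    by (simp add: block_comb_def sum_distrib_left mult.assoc)
  also have "\<dots> = (\<Sum>l'\<in>UNIV. (\<Sum>i<m. t l i * s i l') * complex_of_real (x $ (l', c)))"
    by (subst sum.swap) (simp add: sum_distrib_right)
  also have "\<dots> = complex_of_real (x $ (l, c))"
    by (simp add: biorth if_distrib[of "\<lambda>t. t * _"] cong: if_cong)
  finally show ?thesis by simp
qed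

lemma norm_sq_le_sum_block_comb:
  fixes x :: "real^('p::finite \<times> 'n::finite)"
  assumes biorth: "\<And>l l'. (\<Sum>i<m. t l i * s i l') = (if l = l' then 1 else 0)"
  shows "(norm x)\<^sup>2 \<le> (\<Sum>l\<in>UNIV. \<Sum>i<m. (cmod (t l i))\<^sup>2) * (\<Sum>i<m. (norm (block_comb (s i) x))\<^sup>2)"
proof -
  have "(norm x)\<^sup>2 = (\<Sum>l\<in>UNIV. \<Sum>c\<in>UNIV. (cmod (\<Sum>i<m. t l i * block_comb (s i) x $ c))\<^sup>2)"
    unfolding norm_sq_vec_pair block_comb_inversion[OF biorth, symmetric] by simp
  also have "\<dots> \<le> (\<Sum>l\<in>UNIV. \<Sum>c\<in>UNIV. (\<Sum>i<m. (cmod (t l i))\<^sup>2) * (\<Sum>i<m. (cmod (block_comb (s i) x $ c))\<^sup>2))"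
    by (intro sum_mono cmod_sum_mult_sq_le)
  also have "\<dots> = (\<Sum>l\<in>UNIV. (\<Sum>i<m. (cmod (t l i))\<^sup>2) * (\<Sum>c\<in>UNIV. \<Sum>i<m. (cmod (block_comb (s i) x $ c))\<^sup>2))"
    by (simp add: sum_distrib_left)
  also have "(\<Sum>c\<in>UNIV. \<Sum>i<m. (cmod (block_comb (s i) x $ c))\<^sup>2) = (\<Sum>i<m. (norm (block_comb (s i) x))\<^sup>2)"
    unfolding norm_sq_complex_vec by (rule sum.swap)
  finally show ?thesis by (simp add: sum_distrib_right)
qed

lemma nonincreasing_lyapunov_norm_bound:
  fixes x :: "nat \<Rightarrow> 'a::real_normed_vector"
  assumes decr: "\<And>k. V (x (Suc k)) \<le> V (x k)"
    and lower: "\<And>v. (norm v)\<^sup>2 \<le> C * V v" and upper: "\<And>v. V v \<le> D * (norm v)\<^sup>2"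
    and C: "0 \<le> C" and D: "0 \<le> D"
  shows "norm (x k) \<le> sqrt (C * D) * norm (x 0)"
proof -
  have "V (x k) \<le> V (x 0)"
    by (induction k) (auto intro: order_trans[OF decr])
  then have "(norm (x k))\<^sup>2 \<le> C * (D * (norm (x 0))\<^sup>2)"
    using lower[of "x k"] upper[of "x 0"] C by (meson mult_left_mono order_trans)
  then have "(norm (x k))\<^sup>2 \<le> (sqrt (C * D) * norm (x 0))\<^sup>2"
    using C D by (simp add: power_mult_distrib)
  then show ?thesis by (rule power2_le_imp_le) (use C D in simp)
qed

lemma interconnection_left_chain_basis:
  fixes \<Lambda> :: "real^'p::finite^'p"
  assumes "dt_interconnection \<Lambda>"
  obtains m :: nat and s :: "nat \<Rightarrow> 'p \<Rightarrow> complex" and t :: "'p \<Rightarrow> nat \<Rightarrow> complex"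
    and lam :: "nat \<Rightarrow> complex" and bet :: "nat \<Rightarrow> real" where
    "\<And>i. i < m \<Longrightarrow> (\<lambda>l. \<Sum>l'\<in>UNIV. s i l' * complex_of_real (\<Lambda> $ l' $ l)) =
       (\<lambda>l. lam i * s i l + complex_of_real (bet i) * (if Suc i < m then s (Suc i) l else 0))"
    "\<And>l l'. (\<Sum>i<m. t l i * s i l') = (if l = l' then 1 else 0)"
    "\<And>i. i < m \<Longrightarrow> 0 \<le> bet i \<and> cmod (lam i) + bet i \<le> 1"
    "\<And>i. Suc i < m \<Longrightarrow> cmod (lam (Suc i)) + bet i \<le> 1"
proof -
  define m where "m = CARD('p)"
  obtain g where g: "bij_betw g {..<m} (UNIV :: 'p set)"
    using ex_bij_betw_nat_finite[of "UNIV :: 'p set"] unfolding m_def by (auto simp: atLeast0LessThan)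
  define h where "h = inv_into {..<m} g"
  have hg: "h (g k) = k" if "k < m" for k
    unfolding h_def using g that by (simp add: bij_betw_def inv_into_f_f)
  have gh: "g (h l) = l" for l
    unfolding h_def using g by (simp add: bij_betw_def f_inv_into_f)
  have h_less: "h l < m" for l
    unfolding h_def using g by (metis bij_betw_def inv_into_into lessThan_iff UNIV_I)
  have reindex: "(\<Sum>k<m. f (g k)) = (\<Sum>l\<in>UNIV. f l)" for f :: "'p \<Rightarrow> 'z::comm_monoid_add"
    by (rule sum.reindex_bij_betw[OF g])
  define R where "R = Matrix.mat m m (\<lambda>(i, j). \<Lambda> $ g i $ g j)"
  have Rc: "R \<in> carrier_mat m m" unfolding R_def by simp
  have R_nonneg: "0 \<le> R $$ (i, j)" if "i < m" "j < m" for i j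
    using assms that unfolding R_def dt_interconnection_def by simp
  have R_row_sum: "(\<Sum>j<m. R $$ (i, j)) = 1" if "i < m" for i
    using assms that reindex[of "\<lambda>l. \<Lambda> $ g i $ l"] unfolding R_def dt_interconnection_def by simp
  define A where "A = map_mat complex_of_real R"
  have Ac: "A \<in> carrier_mat m m" unfolding A_def using Rc by simp
  have A_bound: "cmod ((A ^\<^sub>m k) $$ (i, j)) \<le> 1" if "i < m" "j < m" for k i j
    unfolding A_def using stochastic_mat_power_bound[OF Rc R_nonneg R_row_sum that] .
  obtain S T lam bet where Sc: "S \<in> carrier_mat m m" and Tc: "T \<in> carrier_mat m m" and TS: "T * S = 1\<^sub>m m"
    and row: "\<And>i k. i < m \<Longrightarrow> k < m \<Longrightarrow>
      (S * A) $$ (i, k) = lam i * S $$ (i, k) + complex_of_real (bet i) * (if Suc i < m then S $$ (Suc i, k) else 0)"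
    and weights: "\<And>i. i < m \<Longrightarrow> 0 \<le> bet i \<and> cmod (lam i) + bet i \<le> 1"
    and weights_shift: "\<And>i. Suc i < m \<Longrightarrow> cmod (lam (Suc i)) + bet i \<le> 1"
    using power_bounded_scaled_jordan_form[OF Ac A_bound] by blast
  define s where "s i l = S $$ (i, h l)" for i l
  define t where "t l i = T $$ (h l, i)" for l i
  have "(\<lambda>l. \<Sum>l'\<in>UNIV. s i l' * complex_of_real (\<Lambda> $ l' $ l)) =
      (\<lambda>l. lam i * s i l + complex_of_real (bet i) * (if Suc i < m then s (Suc i) l else 0))"
    if i: "i < m" for i
  proof
    fix l
    have "(\<Sum>l'\<in>UNIV. s i l' * complex_of_real (\<Lambda> $ l' $ l)) = (\<Sum>k<m. S $$ (i, k) * A $$ (k, h l))"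
      unfolding reindex[symmetric] s_def A_def R_def using h_less[of l] by (intro sum.cong) (auto simp: hg gh)
    also have "\<dots> = (S * A) $$ (i, h l)" using index_mult_mat_sum[OF Sc Ac i h_less[of l]] by simp
    finally show "(\<Sum>l'\<in>UNIV. s i l' * complex_of_real (\<Lambda> $ l' $ l)) =
        lam i * s i l + complex_of_real (bet i) * (if Suc i < m then s (Suc i) l else 0)"
      using row i h_less[of l] unfolding s_def by simp
  qed
  moreover have "(\<Sum>i<m. t l i * s i l') = (if l = l' then 1 else 0)" for l l'
  proof -
    have "(\<Sum>i<m. t l i * s i l') = (T * S) $$ (h l, h l')"
      unfolding s_def t_def using index_mult_mat_sum[OF Tc Sc h_less[of l] h_less[of l']] by simp
    also have "\<dots> = (if l = l' then 1 else 0)"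
      unfolding TS using h_less[of l] h_less[of l'] by (simp add: inj_on_def) (metis gh)
    finally show ?thesis .
  qed
  ultimately show ?thesis using weights weights_shift by (rule that)
qed

theorem theorem10:
  fixes \<Lambda> :: "real^'p::finite^'p"
  assumes "dt_interconnection \<Lambda>"
  shows "\<exists>\<alpha>>0. \<forall>(Q :: nat \<Rightarrow> real^'n::finite^'n) (x :: nat \<Rightarrow> real^('p \<times> 'n)).
           (\<forall>k. Q k \<in> Qbar) \<longrightarrow>
           (\<forall>k. x (Suc k) = (mat 1 + kron (\<Lambda> - mat 1) (Q k)) *v x k) \<longrightarrow>
           (\<forall>k. norm (x k) \<le> \<alpha> * norm (x 0))"
proof (rule interconnection_left_chain_basis[OF assms])
  fix m s lam bet t
  assume left_chain: "\<And>i. i < m \<Longrightarrow> (\<lambda>l. \<Sum>l'\<in>UNIV. s i l' * complex_of_real (\<Lambda> $ l' $ l)) =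
       (\<lambda>l. lam i * s i l + complex_of_real (bet i) * (if Suc i < m then s (Suc i) l else 0))"
    and biorth: "\<And>l l'. (\<Sum>i<m. t l i * s i l') = (if l = l' then 1 else 0)"
    and weights: "\<And>i. i < m \<Longrightarrow> 0 \<le> bet i \<and> cmod (lam i) + bet i \<le> 1"
    and weights_shift: "\<And>i. Suc i < m \<Longrightarrow> cmod (lam (Suc i)) + bet i \<le> 1"
  define V where "V x = (\<Sum>i<m. (norm (block_comb (s i) x))\<^sup>2)" for x :: "real^('p \<times> 'n)"
  define C where "C = (\<Sum>l\<in>UNIV. \<Sum>i<m. (cmod (t l i))\<^sup>2)"
  define D where "D = (\<Sum>i<m. \<Sum>l\<in>UNIV. (cmod (s i l))\<^sup>2)"
  have lower: "(norm x)\<^sup>2 \<le> C * V x" for x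
    unfolding V_def C_def by (rule norm_sq_le_sum_block_comb[OF biorth])
  have "V x \<le> (\<Sum>i<m. (\<Sum>l\<in>UNIV. (cmod (s i l))\<^sup>2) * (norm x)\<^sup>2)" for x
    unfolding V_def by (intro sum_mono block_comb_norm_sq_le)
  then have upper: "V x \<le> D * (norm x)\<^sup>2" for x unfolding D_def by (simp only: sum_distrib_right)
  have CD: "0 \<le> C" "0 \<le> D" unfolding C_def D_def by (auto intro!: sum_nonneg)
  show ?thesis
  proof (intro exI[of _ "sqrt (C * D) + 1"] conjI allI impI)
    show "0 < sqrt (C * D) + 1" using CD by (simp add: add_nonneg_pos)
    fix Q :: "nat \<Rightarrow> real^'n^'n" and x :: "nat \<Rightarrow> real^('p \<times> 'n)" and k
    assume Q: "\<forall>k. Q k \<in> Qbar" and x: "\<forall>k. x (Suc k) = (mat 1 + kron (\<Lambda> - mat 1) (Q k)) *v x k"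
    have "V (x (Suc j)) \<le> V (x j)" for j
      unfolding V_def x[rule_format]
      by (rule sum_block_comb_norm_sq_nonincreasing[OF Q[rule_format] left_chain weights weights_shift])
    then have "norm (x k) \<le> sqrt (C * D) * norm (x 0)"
      by (rule nonincreasing_lyapunov_norm_bound[OF _ lower upper CD])
    then show "norm (x k) \<le> (sqrt (C * D) + 1) * norm (x 0)"
      by (simp add: distrib_right add_increasing2)
  qed
qed

end
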